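(* If $G$ is a connected graph with girth at least $5$ and maximum degree $\Delta$, then $\chi_D(G)\le \Delta+2$.
   Context: A $k$-coloring of a graph $G$ is a map $\varphi:V(G)\to\{1,\dots,k\}$; it is proper if adjacent vertices get different colors. A coloring $\varphi$ is distinguishing if the only automorphism $f$ of $G$ with $\varphi(f(v))=\varphi(v)$ for all $v$ is the identity. $\chi_D(G)$ is the smallest number of colors in a proper distinguishing coloring of $G$. *)

theory Defs
  imports Main "HOL-Library.Extended_Nat"
begin

definition simple_graph :: "'a set \<Rightarrow> ('a \<Rightarrow> 'a \<Rightarrow> bool) \<Rightarrow> bool" where
  "simple_graph V E \<longleftrightarrow> finite V \<and> (\<forall>u v. E u v \<longrightarrow> u \<in> V \<and> v \<in> V)
     \<and> (\<forall>u v. E u v \<longrightarrow> E v u) \<and> (\<forall>v. \<not> E v v)"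

definition degree :: "'a set \<Rightarrow> ('a \<Rightarrow> 'a \<Rightarrow> bool) \<Rightarrow> 'a \<Rightarrow> nat" where
  "degree V E v = card {u \<in> V. E v u}"

definition max_degree :: "'a set \<Rightarrow> ('a \<Rightarrow> 'a \<Rightarrow> bool) \<Rightarrow> nat" where
  "max_degree V E = Max (degree V E ` V)"

definition connected_graph :: "'a set \<Rightarrow> ('a \<Rightarrow> 'a \<Rightarrow> bool) \<Rightarrow> bool" where
  "connected_graph V E \<longleftrightarrow> V \<noteq> {} \<and> (\<forall>u\<in>V. \<forall>v\<in>V. E\<^sup>*\<^sup>* u v)"

definition is_cycle :: "'a set \<Rightarrow> ('a \<Rightarrow> 'a \<Rightarrow> bool) \<Rightarrow> 'a list \<Rightarrow> bool" where
  "is_cycle V E cs \<longleftrightarrow> length cs \<ge> 3 \<and> distinct cs \<and> set cs \<subseteq> V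
     \<and> (\<forall>i. Suc i < length cs \<longrightarrow> E (cs ! i) (cs ! Suc i))
     \<and> E (last cs) (hd cs)"

text \<open>Girth: length of a shortest cycle (infinity if the graph is acyclic).\<close>
definition girth :: "'a set \<Rightarrow> ('a \<Rightarrow> 'a \<Rightarrow> bool) \<Rightarrow> enat" where
  "girth V E = (INF cs \<in> {cs. is_cycle V E cs}. enat (length cs))"

definition automorphism :: "'a set \<Rightarrow> ('a \<Rightarrow> 'a \<Rightarrow> bool) \<Rightarrow> ('a \<Rightarrow> 'a) \<Rightarrow> bool" where
  "automorphism V E f \<longleftrightarrow> bij_betw f V V \<and> (\<forall>u\<in>V. \<forall>v\<in>V. E u v \<longleftrightarrow> E (f u) (f v))"

definition k_coloring :: "'a set \<Rightarrow> nat \<Rightarrow> ('a \<Rightarrow> nat) \<Rightarrow> bool" where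
  "k_coloring V k \<phi> \<longleftrightarrow> \<phi> ` V \<subseteq> {1..k}"

definition proper_coloring :: "'a set \<Rightarrow> ('a \<Rightarrow> 'a \<Rightarrow> bool) \<Rightarrow> ('a \<Rightarrow> nat) \<Rightarrow> bool" where
  "proper_coloring V E \<phi> \<longleftrightarrow> (\<forall>u\<in>V. \<forall>v\<in>V. E u v \<longrightarrow> \<phi> u \<noteq> \<phi> v)"

definition distinguishing_coloring :: "'a set \<Rightarrow> ('a \<Rightarrow> 'a \<Rightarrow> bool) \<Rightarrow> ('a \<Rightarrow> nat) \<Rightarrow> bool" where
  "distinguishing_coloring V E \<phi> \<longleftrightarrow>
     (\<forall>f. automorphism V E f \<and> (\<forall>v\<in>V. \<phi> (f v) = \<phi> v) \<longrightarrow> (\<forall>v\<in>V. f v = v))"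

definition distinguishing_chromatic_number :: "'a set \<Rightarrow> ('a \<Rightarrow> 'a \<Rightarrow> bool) \<Rightarrow> nat" where
  "distinguishing_chromatic_number V E =
     (LEAST k. \<exists>\<phi>. k_coloring V k \<phi> \<and> proper_coloring V E \<phi> \<and> distinguishing_coloring V E \<phi>)"

end

theory Submission
  imports Defs
begin

text \<open>Fix a root v and a breadth-first ordering \<rho> of the vertices. Colour v with the
  private colour \<Delta> + 2 and then greedily colour the remaining vertices in the order \<rho>
  with colours from 1..\<Delta>+1, where u must avoid the colours of its earlier neighbours and
  of its rivals: earlier vertices w whose unique earlier neighbour p is also the only
  neighbour of u ranked below w. Girth at least 5 and the BFS property force u itself to
  have p as unique earlier neighbour whenever it has a rival, and all rivals are
  neighbours of p other than u, so at most \<Delta> colours are forbidden. A colour-preserving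
  automorphism fixes v, and if it fixes everything before u but moves u to z, then (no
  4-cycles) u is a rival of z, contradicting c z = c u.\<close>

locale finite_simple_graph =
  fixes V :: "'a set" and E :: "'a \<Rightarrow> 'a \<Rightarrow> bool"
  assumes simple: "simple_graph V E"
begin

lemma finite_V: "finite V"
  using simple by (simp add: simple_graph_def)

lemma edge_sym: "E a b \<Longrightarrow> E b a"
  using simple by (simp add: simple_graph_def)

lemma edge_in_V: assumes "E a b" shows "a \<in> V" "b \<in> V"
  using simple assms by (simp_all add: simple_graph_def)

lemma edge_irrefl: "\<not> E a a"
  using simple by (simp add: simple_graph_def)

lemma degree_le_max_degree: "x \<in> V \<Longrightarrow> degree V E x \<le> max_degree V E"
  unfolding max_degree_def using finite_V by simp

lemma girth_le_cycle_length: "is_cycle V E cs \<Longrightarrow> girth V E \<le> enat (length cs)"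
  unfolding girth_def by (rule INF_lower) simp

lemma no_triangle:
  assumes "girth V E \<ge> 4" and "E a b" "E b c" "E c a"
  shows False
proof -
  have "a \<noteq> b" "b \<noteq> c" "c \<noteq> a" using assms edge_irrefl by metis+
  with assms have "is_cycle V E [a, b, c]"
    unfolding is_cycle_def by (auto simp: less_Suc_eq nth_Cons edge_in_V split: nat.splits)
  from order_trans[OF assms(1) girth_le_cycle_length[OF this]] show False
    by (simp add: numeral_eq_enat)
qed

lemma no_square:
  assumes "girth V E \<ge> 5" and "E a b" "E b c" "E c d" "E d a" "a \<noteq> c" "b \<noteq> d"
  shows False
proof -
  have "a \<noteq> b" "b \<noteq> c" "c \<noteq> d" "d \<noteq> a" using assms edge_irrefl by metis+
  with assms have "is_cycle V E [a, b, c, d]"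
    unfolding is_cycle_def by (auto simp: less_Suc_eq nth_Cons edge_in_V split: nat.splits)
  from order_trans[OF assms(1) girth_le_cycle_length[OF this]] show False
    by (simp add: numeral_eq_enat)
qed

lemma common_neighbour_unique:
  assumes "girth V E \<ge> 5" and "E a p" "E b p" "E a q" "E b q" "a \<noteq> b"
  shows "p = q"
  using no_square[OF assms(1), of a p b q] assms edge_sym by blast

lemma connected_crossing_edge:
  assumes "connected_graph V E" and "S \<subseteq> V" "S \<noteq> {}" "S \<noteq> V"
  shows "\<exists>z\<in>V - S. \<exists>y\<in>S. E z y"
proof -
  obtain a b where a: "a \<in> S" and b: "b \<in> V" "b \<notin> S" using assms by blast
  have "E\<^sup>*\<^sup>* a b" using assms a b unfolding connected_graph_def by blast
  then obtain x z where "x \<in> S" "z \<notin> S" "E x z"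
    using a \<open>b \<notin> S\<close> by (induction rule: rtranclp_induct) auto
  then show ?thesis using edge_sym edge_in_V by blast
qed

end


text \<open>Reading the earliest earlier neighbour of a vertex as its BFS parent: parents of
  later vertices never come earlier.\<close>

definition parent_monotone :: "'a set \<Rightarrow> ('a \<Rightarrow> 'a \<Rightarrow> bool) \<Rightarrow> 'a \<Rightarrow> ('a \<Rightarrow> nat) \<Rightarrow> bool" where
  "parent_monotone V E v \<rho> \<longleftrightarrow>
     (\<forall>x\<in>V - {v}. \<forall>x'\<in>V. \<forall>y'. \<rho> x < \<rho> x' \<longrightarrow> E x' y' \<longrightarrow> \<rho> y' < \<rho> x' \<longrightarrow>
        (\<exists>y. E x y \<and> \<rho> y < \<rho> x \<and> \<rho> y \<le> \<rho> y'))"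

definition bfs_ordering :: "'a set \<Rightarrow> ('a \<Rightarrow> 'a \<Rightarrow> bool) \<Rightarrow> 'a \<Rightarrow> ('a \<Rightarrow> nat) \<Rightarrow> bool" where
  "bfs_ordering V E v \<rho> \<longleftrightarrow> v \<in> V \<and> inj_on \<rho> V \<and> \<rho> v = 0
     \<and> (\<forall>x\<in>V - {v}. \<exists>y. E x y \<and> \<rho> y < \<rho> x) \<and> parent_monotone V E v \<rho>"

text \<open>Unvisited vertices all get the rank
  card S, above every visited one, so that the monotonicity condition on the whole of V also
  constrains the edges leaving S: this is what makes it an invariant of extending S.\<close>

definition bfs_prefix :: "'a set \<Rightarrow> ('a \<Rightarrow> 'a \<Rightarrow> bool) \<Rightarrow> 'a \<Rightarrow> 'a set \<Rightarrow> ('a \<Rightarrow> nat) \<Rightarrow> bool" where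
  "bfs_prefix V E v S \<rho> \<longleftrightarrow> S \<subseteq> V \<and> v \<in> S \<and> bij_betw \<rho> S {..<card S}
     \<and> (\<forall>x\<in>V - S. \<rho> x = card S) \<and> \<rho> v = 0
     \<and> (\<forall>x\<in>S - {v}. \<exists>y. E x y \<and> \<rho> y < \<rho> x) \<and> parent_monotone V E v \<rho>"

context finite_simple_graph
begin

lemma bfs_prefix_singleton:
  assumes "v \<in> V" shows "bfs_prefix V E v {v} (\<lambda>x. if x = v then 0 else 1)"
  using assms unfolding bfs_prefix_def parent_monotone_def by (auto simp: bij_betw_def)

lemma bfs_prefix_rank_less_iff:
  assumes "bfs_prefix V E v S \<rho>" and "x \<in> V"
  shows "\<rho> x < card S \<longleftrightarrow> x \<in> S"
  using assms bij_betw_apply[of \<rho> S "{..<card S}" x] unfolding bfs_prefix_def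
  by (metis DiffI lessThan_iff less_irrefl)

lemma parent_monotone_extend:
  assumes pre: "bfs_prefix V E v S \<rho>"
    and z: "z \<in> V - S" and y0: "y0 \<in> S" "E z y0"
    and least: "\<And>z' y. z' \<in> V - S \<Longrightarrow> y \<in> S \<Longrightarrow> E z' y \<Longrightarrow> \<rho> y0 \<le> \<rho> y"
  defines "\<rho>' \<equiv> \<lambda>x. if x \<in> S then \<rho> x else if x = z then card S else Suc (card S)"
  shows "parent_monotone V E v \<rho>'"
  unfolding parent_monotone_def
proof (intro ballI allI impI)
  fix x x' y' assume x: "x \<in> V - {v}" and x': "x' \<in> V"
    and lt: "\<rho>' x < \<rho>' x'" and e: "E x' y'" and lt': "\<rho>' y' < \<rho>' x'"
  have rank: "\<And>x. x \<in> V \<Longrightarrow> x \<in> S \<longleftrightarrow> \<rho> x < card S"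
    using bfs_prefix_rank_less_iff[OF pre] by blast
  have outside: "\<And>x. x \<in> V - S \<Longrightarrow> \<rho> x = card S"
    using pre unfolding bfs_prefix_def by blast
  have y'V: "y' \<in> V" using e edge_in_V by blast
  have y0_rank: "\<rho> y0 < card S" using y0 rank edge_in_V by blast
  have parent: "\<exists>y. E x y \<and> \<rho> y < \<rho> x" if "x \<in> S"
    using pre that x unfolding bfs_prefix_def by blast
  have old: "\<rho> x < \<rho> x' \<Longrightarrow> \<rho> y' < \<rho> x' \<Longrightarrow> \<exists>y. E x y \<and> \<rho> y < \<rho> x \<and> \<rho> y \<le> \<rho> y'"
    using pre x x' e unfolding bfs_prefix_def parent_monotone_def by blast
  show "\<exists>y. E x y \<and> \<rho>' y < \<rho>' x \<and> \<rho>' y \<le> \<rho>' y'"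
  proof (cases "x \<in> S")
    case xS: True
    have "\<rho> x < \<rho> x'" using lt xS x x' rank outside by (auto simp: \<rho>'_def split: if_splits)
    show ?thesis
    proof (cases "y' \<in> S")
      case True
      then have "\<rho> y' < \<rho> x'" using lt' x' y'V rank outside by (auto simp: \<rho>'_def split: if_splits)
      with old \<open>\<rho> x < \<rho> x'\<close> obtain y where "E x y" "\<rho> y < \<rho> x" "\<rho> y \<le> \<rho> y'" by blast
      moreover have "y \<in> S" using calculation xS rank edge_in_V by (meson order.strict_trans)
      ultimately show ?thesis using xS True by (auto simp: \<rho>'_def)
    next
      case False
      obtain y where "E x y" "\<rho> y < \<rho> x" using parent xS by blast
      moreover have "y \<in> S" using calculation xS rank edge_in_V by (meson order.strict_trans)
      ultimately show ?thesis using xS False rank x by (auto simp: \<rho>'_def intro!: exI[of _ y])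
    qed
  next
    case False
    then have "x = z" "x' \<notin> S" "x' \<noteq> z" using lt x' z rank by (auto simp: \<rho>'_def split: if_splits)
    then have "\<rho> y0 \<le> \<rho>' y'"
      using least[of x' y'] lt' x' e y0 y0_rank rank by (auto simp: \<rho>'_def split: if_splits)
    then show ?thesis using \<open>x = z\<close> y0 y0_rank z by (auto simp: \<rho>'_def intro!: exI[of _ y0])
  qed
qed

lemma bfs_prefix_extend:
  assumes pre: "bfs_prefix V E v S \<rho>"
    and z: "z \<in> V - S" and y0: "y0 \<in> S" "E z y0"
    and least: "\<And>z' y. z' \<in> V - S \<Longrightarrow> y \<in> S \<Longrightarrow> E z' y \<Longrightarrow> \<rho> y0 \<le> \<rho> y"
  shows "bfs_prefix V E v (insert z S)
           (\<lambda>x. if x \<in> S then \<rho> x else if x = z then card S else Suc (card S))"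
    (is "bfs_prefix V E v _ ?\<rho>'")
proof -
  have S: "S \<subseteq> V" "v \<in> S" "\<rho> v = 0" and bij: "bij_betw \<rho> S {..<card S}"
    and parent: "\<And>x. x \<in> S - {v} \<Longrightarrow> \<exists>y. E x y \<and> \<rho> y < \<rho> x"
    using pre unfolding bfs_prefix_def by blast+
  have rank: "\<And>x. x \<in> V \<Longrightarrow> x \<in> S \<longleftrightarrow> \<rho> x < card S"
    using bfs_prefix_rank_less_iff[OF pre] by blast
  have card_insert: "card (insert z S) = Suc (card S)"
    using z finite_subset[OF S(1) finite_V] by simp
  have "bij_betw ?\<rho>' S {..<card S}"
    using bij by (rule bij_betw_cong[THEN iffD1, rotated]) simp
  then have "bij_betw ?\<rho>' (S \<union> {z}) ({..<card S} \<union> {?\<rho>' z})"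
    using z by (subst notIn_Un_bij_betw3[symmetric]) auto
  then have "bij_betw ?\<rho>' (insert z S) {..<card (insert z S)}"
    using z by (simp add: card_insert lessThan_Suc)
  moreover have "\<exists>y. E x y \<and> ?\<rho>' y < ?\<rho>' x" if "x \<in> insert z S - {v}" for x
  proof (cases "x = z")
    case True then show ?thesis using y0 z rank edge_in_V by (auto intro!: exI[of _ y0])
  next
    case False
    with that have x: "x \<in> S - {v}" by blast
    then obtain y where "E x y" "\<rho> y < \<rho> x" using parent by blast
    moreover have "y \<in> S" using calculation x rank edge_in_V S(1) by (meson DiffD1 order.strict_trans subsetD)
    ultimately show ?thesis using x z rank edge_in_V by (auto intro!: exI[of _ y])
  qed
  ultimately show ?thesis
    using S z card_insert parent_monotone_extend[OF assms]
    unfolding bfs_prefix_def by auto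
qed

lemma bfs_prefix_grow:
  assumes "connected_graph V E" and pre: "bfs_prefix V E v S \<rho>" and "S \<noteq> V"
  shows "\<exists>S' \<rho>'. bfs_prefix V E v S' \<rho>' \<and> card S' = Suc (card S)"
proof -
  have S: "S \<subseteq> V" "v \<in> S" using pre unfolding bfs_prefix_def by blast+
  let ?attached = "\<lambda>y. y \<in> S \<and> (\<exists>z\<in>V - S. E z y)"
  obtain b where "?attached b"
    using connected_crossing_edge assms S by blast
  then obtain y0 where "?attached y0" and least_y0: "\<And>y. ?attached y \<Longrightarrow> \<rho> y0 \<le> \<rho> y"
    using ex_has_least_nat[of ?attached b \<rho>] by blast
  then obtain z where z: "z \<in> V - S" and y0: "y0 \<in> S" "E z y0" by blast
  have least: "\<And>z' y. z' \<in> V - S \<Longrightarrow> y \<in> S \<Longrightarrow> E z' y \<Longrightarrow> \<rho> y0 \<le> \<rho> y"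
    using least_y0 by blast
  have "bfs_prefix V E v (insert z S)
          (\<lambda>x. if x \<in> S then \<rho> x else if x = z then card S else Suc (card S))"
    using pre z y0 least by (rule bfs_prefix_extend)
  moreover have "card (insert z S) = Suc (card S)"
    using z finite_subset[OF S(1) finite_V] by simp
  ultimately show ?thesis by blast
qed

lemma bfs_ordering_exists:
  assumes conn: "connected_graph V E" and v: "v \<in> V"
  shows "\<exists>\<rho>. bfs_ordering V E v \<rho>"
proof -
  have "\<exists>S \<rho>. bfs_prefix V E v S \<rho> \<and> (n \<le> card S \<or> S = V)" for n
  proof (induction n)
    case 0 show ?case using bfs_prefix_singleton[OF v] by blast
  next
    case (Suc n)
    then obtain S \<rho> where pre: "bfs_prefix V E v S \<rho>" and n: "n \<le> card S \<or> S = V" by blast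
    show ?case
    proof (cases "S = V \<or> Suc n \<le> card S")
      case False
      then show ?thesis using bfs_prefix_grow[OF conn pre] n by fastforce
    qed (use pre in blast)
  qed
  then obtain S \<rho> where pre: "bfs_prefix V E v S \<rho>" and "card V \<le> card S \<or> S = V" by blast
  moreover have "S \<subseteq> V" using pre unfolding bfs_prefix_def by blast
  ultimately have "S = V" using finite_V card_seteq by blast
  with pre show ?thesis
    unfolding bfs_prefix_def bfs_ordering_def by (auto simp: bij_betw_def)
qed

end

lemma greedy_coloring:
  fixes \<rho> :: "'a \<Rightarrow> nat"
  assumes fin: "finite V"
    and earlier: "\<And>u. u \<in> V \<Longrightarrow> A u \<subseteq> {x \<in> V. \<rho> x < \<rho> u}"
    and enough: "\<And>u. u \<in> V \<Longrightarrow> card (A u) < card (C u)"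
  shows "\<exists>c. \<forall>u\<in>V. c u \<in> C u \<and> c u \<notin> c ` A u"
proof -
  have free: "\<exists>col. col \<in> C u \<and> col \<notin> c ` A u" if u: "u \<in> V" for u and c :: "'a \<Rightarrow> 'b"
  proof (rule ccontr)
    assume "\<not> ?thesis"
    then have "C u \<subseteq> c ` A u" by auto
    moreover have "finite (A u)" using finite_subset[OF earlier[OF u]] fin by simp
    ultimately have "card (C u) \<le> card (A u)"
      by (meson card_image_le card_mono finite_imageI order_trans)
    with enough[OF u] show False by simp
  qed
  have "\<exists>c. \<forall>u\<in>V. \<rho> u < n \<longrightarrow> c u \<in> C u \<and> c u \<notin> c ` A u" for n
  proof (induction n)
    case (Suc n)
    then obtain c where c: "\<forall>u\<in>V. \<rho> u < n \<longrightarrow> c u \<in> C u \<and> c u \<notin> c ` A u" by blast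
    define c' where "c' u = (if \<rho> u = n then SOME col. col \<in> C u \<and> col \<notin> c ` A u else c u)" for u
    have same: "c' ` A u = c ` A u" if "u \<in> V" "\<rho> u \<le> n" for u
      using earlier[OF that(1)] that(2) by (intro image_cong) (auto simp: c'_def)
    have "c' u \<in> C u \<and> c' u \<notin> c' ` A u" if "u \<in> V" "\<rho> u < Suc n" for u
    proof (cases "\<rho> u = n")
      case True
      then show ?thesis using someI_ex[OF free[OF that(1), of c]] same that by (simp add: c'_def)
    next
      case False
      then show ?thesis using c same that by (simp add: c'_def)
    qed
    then show ?case by blast
  qed simp
  then obtain c where c: "\<forall>u\<in>V. \<rho> u < Suc (Max (\<rho> ` V)) \<longrightarrow> c u \<in> C u \<and> c u \<notin> c ` A u"
    by blast
  have "\<rho> u < Suc (Max (\<rho> ` V))" if "u \<in> V" for u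
    using fin that by (simp add: le_imp_less_Suc)
  with c show ?thesis by blast
qed

lemma automorphism_apply: "automorphism V E f \<Longrightarrow> x \<in> V \<Longrightarrow> f x \<in> V"
  unfolding automorphism_def by (blast intro: bij_betw_apply)

lemma automorphism_inj_on: "automorphism V E f \<Longrightarrow> inj_on f V"
  unfolding automorphism_def by (blast intro: bij_betw_imp_inj_on)

lemma automorphism_adj_iff:
  assumes "automorphism V E f" "a \<in> V" "b \<in> V"
  shows "E (f a) (f b) \<longleftrightarrow> E a b"
proof -
  have "\<forall>u\<in>V. \<forall>v\<in>V. E u v \<longleftrightarrow> E (f u) (f v)"
    using assms(1) unfolding automorphism_def by (rule conjunct2)
  from this[rule_format, OF assms(2,3)] show ?thesis by (rule sym)
qed

locale bfs_ordered_girth5_graph = finite_simple_graph +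
  fixes v :: 'a and \<rho> :: "'a \<Rightarrow> nat"
  assumes bfs: "bfs_ordering V E v \<rho>" and girth: "girth V E \<ge> 5"
begin

lemma root_in_V: "v \<in> V" and rank_root: "\<rho> v = 0"
  using bfs unfolding bfs_ordering_def by blast+

lemma rank_inj: "x \<in> V \<Longrightarrow> y \<in> V \<Longrightarrow> \<rho> x = \<rho> y \<Longrightarrow> x = y"
  using bfs unfolding bfs_ordering_def inj_on_def by blast

lemma parent_exists: "x \<in> V \<Longrightarrow> x \<noteq> v \<Longrightarrow> \<exists>y. E x y \<and> \<rho> y < \<rho> x"
  using bfs unfolding bfs_ordering_def by blast

lemma parent_rank_monotone:
  "x \<in> V \<Longrightarrow> x \<noteq> v \<Longrightarrow> x' \<in> V \<Longrightarrow> \<rho> x < \<rho> x' \<Longrightarrow> E x' y' \<Longrightarrow> \<rho> y' < \<rho> x'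
    \<Longrightarrow> \<exists>y. E x y \<and> \<rho> y < \<rho> x \<and> \<rho> y \<le> \<rho> y'"
  using bfs unfolding bfs_ordering_def parent_monotone_def by blast

lemma triangle_free: "E a b \<Longrightarrow> E b c \<Longrightarrow> E c a \<Longrightarrow> False"
  using no_triangle girth order_trans[of 4 5 "girth V E"] by (simp add: numeral_eq_enat)

definition earlier_nbrs :: "'a \<Rightarrow> 'a set" where
  "earlier_nbrs u = {x. E u x \<and> \<rho> x < \<rho> u}"

text \<open>w is a rival of u if an automorphism fixing every vertex before w might still map w
  to u (cf. moved_vertex_is_rival).\<close>

definition rivals :: "'a \<Rightarrow> 'a set" where
  "rivals u = {w \<in> V. \<rho> w < \<rho> u
     \<and> (\<exists>p. earlier_nbrs w = {p} \<and> {x. E u x \<and> \<rho> x < \<rho> w} = {p})}"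

definition forbidden :: "'a \<Rightarrow> 'a set" where
  "forbidden u = earlier_nbrs u \<union> rivals u"

lemma forbidden_earlier: "forbidden u \<subseteq> {x \<in> V. \<rho> x < \<rho> u}"
  unfolding forbidden_def earlier_nbrs_def rivals_def using edge_in_V by auto

lemma earlier_nbrs_singletonD:
  assumes "earlier_nbrs w = {p}"
  shows "E w p" "\<rho> p < \<rho> w" "\<And>x. E w x \<Longrightarrow> \<rho> x < \<rho> w \<Longrightarrow> x = p"
  using assms unfolding earlier_nbrs_def by (simp_all add: set_eq_iff) metis+

lemma earlier_nbrs_singletonI:
  assumes "E w p" "\<rho> p < \<rho> w" "\<And>x. E w x \<Longrightarrow> \<rho> x < \<rho> w \<Longrightarrow> x = p"
  shows "earlier_nbrs w = {p}"
  using assms unfolding earlier_nbrs_def by blast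

lemma earlier_nbrs_of_rival:
  assumes "w \<in> rivals u" shows "earlier_nbrs u = earlier_nbrs w"
proof -
  obtain p where w: "w \<in> V" "\<rho> w < \<rho> u" and par_w: "earlier_nbrs w = {p}"
    and below_w: "{x. E u x \<and> \<rho> x < \<rho> w} = {p}"
    using assms unfolding rivals_def by blast
  note p = earlier_nbrs_singletonD[OF par_w]
  have "p \<in> {x. E u x \<and> \<rho> x < \<rho> w}" using below_w by simp
  then have up: "E u p" by simp
  have below_w': "x = p" if "E u x" "\<rho> x < \<rho> w" for x
  proof -
    have "x \<in> {x. E u x \<and> \<rho> x < \<rho> w}" using that by simp
    then show ?thesis using below_w by simp
  qed
  have wv: "w \<noteq> v" using p(2) rank_root by auto
  have uV: "u \<in> V" using up edge_in_V by blast
  have "r = p" if r: "E u r" "\<rho> r < \<rho> u" for r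
  proof (rule ccontr)
    assume "r \<noteq> p"
    with below_w' r(1) have "\<not> \<rho> r < \<rho> w" by blast
    moreover have "r \<noteq> w" using triangle_free[of u w p] r(1) p(1) up edge_sym by metis
    moreover have rV: "r \<in> V" using r(1) edge_in_V by blast
    ultimately have wr: "\<rho> w < \<rho> r" using rank_inj[OF rV w(1)] by (metis linorder_neqE_nat)
    then have rv: "r \<noteq> v" using rank_root by auto
    have "\<rho> p < \<rho> u" using p(2) w(2) by linarith
    then obtain s where s: "E r s" "\<rho> s < \<rho> r" "\<rho> s \<le> \<rho> p"
      using parent_rank_monotone[OF rV rv uV r(2) up] by blast
    obtain y where y: "E w y" "\<rho> y < \<rho> w" "\<rho> y \<le> \<rho> s"
      using parent_rank_monotone[OF w(1) wv rV wr s(1) s(2)] by blast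
    then have "y = p" using p(3) by blast
    with s y have "\<rho> s = \<rho> p" by simp
    then have "s = p" by (rule rank_inj[OF edge_in_V(2)[OF s(1)] edge_in_V(2)[OF p(1)]])
    then show False using triangle_free[of r p u] s(1) up r(1) edge_sym by blast
  qed
  moreover have "\<rho> p < \<rho> u" using p(2) w(2) by linarith
  ultimately have "earlier_nbrs u = {p}" using up by (intro earlier_nbrs_singletonI)
  with par_w show ?thesis by simp
qed

lemma card_forbidden: assumes u: "u \<in> V" shows "card (forbidden u) \<le> max_degree V E"
proof (cases "rivals u = {}")
  case True
  then have "forbidden u \<subseteq> {x \<in> V. E u x}"
    unfolding forbidden_def earlier_nbrs_def using edge_in_V by auto
  then have "card (forbidden u) \<le> degree V E u"
    unfolding degree_def using finite_V by (simp add: card_mono)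
  then show ?thesis using degree_le_max_degree[OF u] by simp
next
  case False
  then obtain w p where "w \<in> rivals u" "earlier_nbrs w = {p}" unfolding rivals_def by blast
  then have par_u: "earlier_nbrs u = {p}" using earlier_nbrs_of_rival by blast
  define N where "N = {x \<in> V. E p x}"
  have "rivals u \<subseteq> N - {u}"
  proof
    fix w' assume w': "w' \<in> rivals u"
    then have "earlier_nbrs w' = {p}" using earlier_nbrs_of_rival par_u by simp
    then show "w' \<in> N - {u}"
      using w' edge_sym unfolding N_def earlier_nbrs_def rivals_def by auto
  qed
  then have "forbidden u \<subseteq> insert p (N - {u})"
    unfolding forbidden_def par_u by blast
  moreover have "E u p" using par_u unfolding earlier_nbrs_def by blast
  then have uN: "u \<in> N" and p: "p \<in> V" using u edge_sym edge_in_V unfolding N_def by auto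
  moreover have finN: "finite N" using finite_V unfolding N_def by simp
  ultimately have "card (forbidden u) \<le> card (insert p (N - {u}))"
    by (intro card_mono) auto
  also have "\<dots> \<le> Suc (card (N - {u}))" using finN by (simp add: card_insert_if)
  also have "\<dots> = degree V E p" using card_Suc_Diff1[OF finN uN] unfolding N_def degree_def .
  also have "\<dots> \<le> max_degree V E" using degree_le_max_degree[OF p] .
  finally show ?thesis .
qed

lemma moved_vertex_is_rival:
  assumes f: "automorphism V E f" and u: "u \<in> V" "u \<noteq> v" "f u \<noteq> u"
    and fixed: "\<And>x. x \<in> V \<Longrightarrow> \<rho> x < \<rho> u \<Longrightarrow> f x = x"
  shows "u \<in> rivals (f u)"
proof -
  define z where "z = f u"
  have zV: "z \<in> V" using automorphism_apply[OF f u(1)] unfolding z_def .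
  have nbr_z: "E z x \<longleftrightarrow> E u x" if "x \<in> V" "\<rho> x < \<rho> u" for x
    using automorphism_adj_iff[OF f u(1) that(1)] fixed[OF that] unfolding z_def by simp
  obtain p where p: "E u p" "\<rho> p < \<rho> u" using parent_exists u by blast
  have pV: "p \<in> V" using p(1) edge_in_V by blast
  have par_u: "earlier_nbrs u = {p}"
  proof (rule earlier_nbrs_singletonI[OF p])
    fix x assume x: "E u x" "\<rho> x < \<rho> u"
    then have "E z x" using nbr_z[OF edge_in_V(2)[OF x(1)] x(2)] by simp
    moreover have "E z p" using nbr_z[OF pV p(2)] p(1) by simp
    moreover have "u \<noteq> z" using u(3) unfolding z_def by simp
    ultimately show "x = p" using common_neighbour_unique[OF girth p(1) _ x(1)] by blast
  qed
  have "\<not> \<rho> z < \<rho> u"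
  proof
    assume "\<rho> z < \<rho> u"
    then have "f z = f u" using fixed[OF zV] z_def by simp
    with automorphism_inj_on[OF f] zV u(1) u(3) show False unfolding z_def inj_on_def by blast
  qed
  moreover have "\<rho> z \<noteq> \<rho> u" using rank_inj[OF zV u(1)] u(3) z_def by auto
  ultimately have uz: "\<rho> u < \<rho> z" by simp
  have "{x. E z x \<and> \<rho> x < \<rho> u} = earlier_nbrs u"
  proof (intro set_eqI)
    fix x
    show "x \<in> {x. E z x \<and> \<rho> x < \<rho> u} \<longleftrightarrow> x \<in> earlier_nbrs u"
      using nbr_z[of x] edge_in_V(2)[of z x] edge_in_V(2)[of u x] unfolding earlier_nbrs_def by auto
  qed
  with par_u have "{x. E z x \<and> \<rho> x < \<rho> u} = {p}" by simp
  with par_u uz u(1) have "u \<in> rivals z"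
    unfolding rivals_def by (intro CollectI conjI exI[of _ p])
  then show ?thesis unfolding z_def .
qed

lemma color_preserving_automorphism_is_id:
  assumes avoid: "\<And>u. u \<in> V \<Longrightarrow> c u \<notin> c ` forbidden u"
    and root_unique: "\<And>u. u \<in> V \<Longrightarrow> u \<noteq> v \<Longrightarrow> c u \<noteq> c v"
    and f: "automorphism V E f" and fc: "\<And>x. x \<in> V \<Longrightarrow> c (f x) = c x"
  shows "x \<in> V \<Longrightarrow> f x = x"
proof (induction "\<rho> x" arbitrary: x rule: less_induct)
  case (less x)
  have fx: "f x \<in> V" using automorphism_apply[OF f less.prems] .
  show ?case
  proof (rule ccontr)
    assume moved: "f x \<noteq> x"
    show False
    proof (cases "x = v")
      case True
      then show False using root_unique[OF fx] fc[OF less.prems] moved by simp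
    next
      case False
      with less have "x \<in> rivals (f x)" using moved_vertex_is_rival[OF f] moved by blast
      then have "c x \<in> c ` forbidden (f x)" unfolding forbidden_def by blast
      with avoid[OF fx] fc[OF less.prems] show False by simp
    qed
  qed
qed

lemma forbidden_avoiding_coloring_proper:
  assumes avoid: "\<And>u. u \<in> V \<Longrightarrow> c u \<notin> c ` forbidden u"
  shows "proper_coloring V E c"
  unfolding proper_coloring_def
proof (intro ballI impI)
  have earlier_differs: "c a \<noteq> c b" if "b \<in> V" "E b a" "\<rho> a < \<rho> b" for a b
  proof -
    have "a \<in> forbidden b" using that unfolding forbidden_def earlier_nbrs_def by blast
    then show ?thesis using avoid[OF that(1)] by (metis image_eqI)
  qed
  fix a b assume ab: "a \<in> V" "b \<in> V" "E a b"
  have "\<rho> a \<noteq> \<rho> b" using rank_inj[OF ab(1,2)] ab(3) edge_irrefl by blast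
  then consider "\<rho> a < \<rho> b" | "\<rho> b < \<rho> a" by linarith
  then show "c a \<noteq> c b"
    using earlier_differs[of b a] earlier_differs[of a b] ab edge_sym by cases auto
qed

lemma distinguishing_proper_coloring_exists:
  "\<exists>c. k_coloring V (max_degree V E + 2) c \<and> proper_coloring V E c \<and> distinguishing_coloring V E c"
proof -
  define \<Delta> where "\<Delta> = max_degree V E"
  define C where "C u = (if u = v then {\<Delta> + 2} else {1..\<Delta> + 1})" for u
  have "\<exists>c. \<forall>u\<in>V. c u \<in> C u \<and> c u \<notin> c ` forbidden u"
  proof (rule greedy_coloring[OF finite_V])
    fix u assume u: "u \<in> V"
    show "forbidden u \<subseteq> {x \<in> V. \<rho> x < \<rho> u}" by (rule forbidden_earlier)
    have "forbidden v = {}" using forbidden_earlier[of v] rank_root by auto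
    then show "card (forbidden u) < card (C u)"
      using card_forbidden[OF u] unfolding C_def \<Delta>_def by auto
  qed
  then obtain c where c: "\<And>u. u \<in> V \<Longrightarrow> c u \<in> C u \<and> c u \<notin> c ` forbidden u" by blast
  have "k_coloring V (\<Delta> + 2) c"
    unfolding k_coloring_def using c by (force simp: C_def split: if_splits)
  moreover have "proper_coloring V E c"
    using c by (intro forbidden_avoiding_coloring_proper) blast
  moreover have "distinguishing_coloring V E c"
    unfolding distinguishing_coloring_def
  proof (intro allI impI ballI)
    have "c u \<noteq> c v" if "u \<in> V" "u \<noteq> v" for u
      using c[OF that(1)] c[OF root_in_V] that(2) unfolding C_def by auto
    then show "f x = x" if "automorphism V E f \<and> (\<forall>x\<in>V. c (f x) = c x)" "x \<in> V" for f x
      using color_preserving_automorphism_is_id[of c f x] c that by blast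
  qed
  ultimately show ?thesis unfolding \<Delta>_def by blast
qed

end

theorem proposition3:
  fixes V :: "'a set" and E :: "'a \<Rightarrow> 'a \<Rightarrow> bool"
  assumes "simple_graph V E"
    and "connected_graph V E"
    and "girth V E \<ge> 5"
  shows "distinguishing_chromatic_number V E \<le> max_degree V E + 2"
proof -
  interpret finite_simple_graph V E by (rule finite_simple_graph.intro) fact
  obtain v where "v \<in> V" using assms(2) unfolding connected_graph_def by blast
  then obtain \<rho> where "bfs_ordering V E v \<rho>" using bfs_ordering_exists assms(2) by blast
  then interpret bfs_ordered_girth5_graph V E v \<rho> using assms(3) by unfold_locales
  obtain c where "k_coloring V (max_degree V E + 2) c" "proper_coloring V E c"
    "distinguishing_coloring V E c"
    using distinguishing_proper_coloring_exists by blast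
  then show ?thesis unfolding distinguishing_chromatic_number_def by (intro Least_le) blast
qed

end
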